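(* Let $n\ge 2$, let $V\in\mathbb{R}^{n\times(n-1)}$ be such that $\big[V\ \ \tfrac1{\sqrt n}e\big]$ is orthogonal, and let $v_\ell\in\mathbb{R}^{1\times(n-1)}$ denote the $\ell$-th row of $V$. Let $D_0\in\mathcal{E}^n$, indices $1\le i<j\le n$, $\alpha\in\mathbb{R}$, and suppose $D_n:=D_0+\alpha E_{ij}\notin\mathcal{E}^n$. Let $\bar X$ be the unique minimizer of $\min_{X\in\mathcal{S}^{n-1},\,X\succeq0}\frac12\|\mathcal{K}_V(X)-D_n\|_F^2$, and let $X_0:=\mathcal{K}_V^\dagger(D_0)$. Put $$Y:=\mathcal{K}_V^*(E_{ij})=2\,(v_i-v_j)^T(v_i-v_j).$$ Then $\alpha\neq0$, $0\neq Y\succeq0$, and the following are equivalent: (a) $D_0=\mathcal{K}_V(\bar X)$ (i.e. $D_0$ is the nearest EDM to $D_n$); (b) $X_0\in\mathcal{S}^{n-1}_+\cap Y^\perp$ (equivalently $\operatorname{trace}(X_0Y)=0$) and $\alpha<0$; (c) $(D_0)_{ij}=0$ and $\alpha<0$.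
   Context: $\mathcal{E}^n$ is the closed convex cone of $n\times n$ Euclidean distance matrices (squared distances). $E_{ij}=e_ie_j^T+e_je_i^T$ with $e_i$ the standard unit vectors; $e$ is the all-ones vector. $\mathcal{K}(G)=\operatorname{diag}(G)e^T+e\operatorname{diag}(G)^T-2G$ (Lindenstrauss operator), $\mathcal{K}^*(D)=2(\operatorname{Diag}(De)-D)$ its adjoint, $\mathcal{K}_V(X)=\mathcal{K}(VXV^T)$ for $X\in\mathcal{S}^{n-1}$, $\mathcal{K}_V^*(D)=V^T\mathcal{K}^*(D)V$, and $\mathcal{K}_V^\dagger$ is the Moore–Penrose pseudoinverse of $\mathcal{K}_V$. $\mathcal{S}^{n-1}_+$ is the cone of positive semidefinite matrices in $\mathcal{S}^{n-1}$ and $Y^\perp=\{X:\operatorname{trace}(XY)=0\}$. *)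

theory Defs
  imports "Jordan_Normal_Form.Matrix"
begin

text \<open>Matrices are Jordan_Normal_Form matrices with explicit dimensions; indices are 0-based.\<close>

definition symm_mat :: "nat \<Rightarrow> real mat \<Rightarrow> bool" where
  "symm_mat k A \<longleftrightarrow> A \<in> carrier_mat k k \<and> transpose_mat A = A"

definition psd_mat :: "nat \<Rightarrow> real mat \<Rightarrow> bool" where
  "psd_mat k A \<longleftrightarrow> symm_mat k A \<and> (\<forall>x \<in> carrier_vec k. 0 \<le> x \<bullet> (A *\<^sub>v x))"

definition EDM :: "nat \<Rightarrow> real mat \<Rightarrow> bool" where
  "EDM n D \<longleftrightarrow> D \<in> carrier_mat n n \<and>
     (\<exists>(k::nat) (p::nat \<Rightarrow> nat \<Rightarrow> real). \<forall>a<n. \<forall>b<n. D $$ (a,b) = (\<Sum>l<k. (p a l - p b l)^2))"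

definition Emat :: "nat \<Rightarrow> nat \<Rightarrow> nat \<Rightarrow> real mat" where
  "Emat n i j = mat n n (\<lambda>(a,b). (if a = i \<and> b = j then 1 else 0) + (if a = j \<and> b = i then 1 else 0))"

text \<open>Lindenstrauss operator K(G) = diag(G)e^T + e diag(G)^T - 2G.\<close>
definition lindK :: "nat \<Rightarrow> real mat \<Rightarrow> real mat" where
  "lindK n G = mat n n (\<lambda>(a,b). G $$ (a,a) + G $$ (b,b) - 2 * G $$ (a,b))"

text \<open>Adjoint K^*(D) = 2 (Diag(De) - D).\<close>
definition lindK_adj :: "nat \<Rightarrow> real mat \<Rightarrow> real mat" where
  "lindK_adj n D = mat n n (\<lambda>(a,b). 2 * ((if a = b then (\<Sum>c<n. D $$ (a,c)) else 0) - D $$ (a,b)))"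

definition KV :: "real mat \<Rightarrow> real mat \<Rightarrow> real mat" where
  "KV V X = lindK (dim_row V) (V * X * transpose_mat V)"

definition KV_adj :: "real mat \<Rightarrow> real mat \<Rightarrow> real mat" where
  "KV_adj V D = transpose_mat V * lindK_adj (dim_row V) D * V"

definition mtrace :: "real mat \<Rightarrow> real" where
  "mtrace A = (\<Sum>a<dim_row A. A $$ (a,a))"

definition fro_sq :: "real mat \<Rightarrow> real" where
  "fro_sq A = (\<Sum>a<dim_row A. \<Sum>b<dim_col A. (A $$ (a,b))^2)"

text \<open>Moore--Penrose pseudoinverse of K_V : S^{n-1} \<rightarrow> R^{n x n} (Frobenius inner products):
  the minimum-norm least-squares solution.\<close>
definition KV_pinv :: "real mat \<Rightarrow> real mat \<Rightarrow> real mat" where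
  "KV_pinv V D = (let m = dim_col V;
       LS = {X. symm_mat m X \<and> (\<forall>Z. symm_mat m Z \<longrightarrow> fro_sq (KV V X - D) \<le> fro_sq (KV V Z - D))}
     in THE X. X \<in> LS \<and> (\<forall>Z \<in> LS. fro_sq X \<le> fro_sq Z))"

end

theory Submission
  imports Defs "Jordan_Normal_Form.Determinant"
begin

text \<open>
  Let \<open>v\<^sub>a\<close> be the rows of \<open>V\<close>. Orthogonality of \<open>[V e/sqrt n]\<close> gives \<open>V\<^sup>T V = I\<close>,
  \<open>V\<^sup>T e = 0\<close> and \<open>V V\<^sup>T = I - e e\<^sup>T/n\<close>. Hence \<open>K\<^sub>V(X)\<^sub>a\<^sub>b = (v\<^sub>a - v\<^sub>b)\<^sup>T X (v\<^sub>a - v\<^sub>b)\<close>,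
  \<open>K\<^sub>V\<close> is injective, and \<open>K\<^sub>V\<^sup>\<dagger> D\<^sub>0\<close> is the positive semidefinite Gram-type matrix
  \<open>X\<^sub>0\<close> with \<open>K\<^sub>V(X\<^sub>0) = D\<^sub>0\<close>. Moreover \<open>Y = 2 w w\<^sup>T\<close> with \<open>w = v\<^sub>i - v\<^sub>j\<close>, \<open>|w|\<^sup>2 = 2\<close>,
  so \<open>trace (X\<^sub>0 Y) = 2 (D\<^sub>0)\<^sub>i\<^sub>j\<close>, which gives (b) \<open>\<longleftrightarrow>\<close> (c).

  For (a) \<open>\<longleftrightarrow>\<close> (c) write \<open>F = K\<^sub>V(X) - D\<^sub>0\<close>; then
  \<open>|K\<^sub>V(X) - D\<^sub>0 - \<alpha> E\<^sub>i\<^sub>j|\<^sup>2 = |F|\<^sup>2 - 4 \<alpha> F\<^sub>i\<^sub>j + 2 \<alpha>\<^sup>2\<close>. If \<open>(D\<^sub>0)\<^sub>i\<^sub>j = 0\<close> and \<open>\<alpha> < 0\<close>, the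
  middle term is nonnegative for positive semidefinite \<open>X\<close>, so \<open>X\<^sub>0\<close> (where \<open>F = 0\<close>) is optimal and every
  minimiser has \<open>F = 0\<close>. Conversely, if \<open>D\<^sub>0 = K\<^sub>V(X)\<close> is optimal, the perturbations \<open>X + t I\<close>
  and \<open>(1 + t) X\<close> for small \<open>t\<close> force \<open>\<alpha> \<le> 0\<close> and \<open>\<alpha> (D\<^sub>0)\<^sub>i\<^sub>j = 0\<close>; finally \<open>\<alpha> \<noteq> 0\<close>
  because \<open>D\<^sub>0\<close> itself is a Euclidean distance matrix.
\<close>

section \<open>Positive semidefinite matrices\<close>

lemma psd_mat_symm: "psd_mat m X \<Longrightarrow> symm_mat m X"
  unfolding psd_mat_def by simp

lemma symm_mat_carrier: "symm_mat m X \<Longrightarrow> X \<in> carrier_mat m m"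
  unfolding symm_mat_def by simp

lemma quad_form_add:
  fixes A B :: "real mat"
  assumes "A \<in> carrier_mat m m" "B \<in> carrier_mat m m" "x \<in> carrier_vec m"
  shows "x \<bullet> ((A + B) *\<^sub>v x) = x \<bullet> (A *\<^sub>v x) + x \<bullet> (B *\<^sub>v x)"
  using assms by (simp add: add_mult_distrib_mat_vec scalar_prod_add_distrib[of _ m])

lemma quad_form_smult:
  fixes A :: "real mat"
  assumes "A \<in> carrier_mat m m" "x \<in> carrier_vec m"
  shows "x \<bullet> ((t \<cdot>\<^sub>m A) *\<^sub>v x) = t * (x \<bullet> (A *\<^sub>v x))"
  using assms by (simp add: scalar_prod_def sum_distrib_left algebra_simps)

lemma quad_form_gram:
  fixes B :: "real mat"
  assumes B: "B \<in> carrier_mat m k" and x: "x \<in> carrier_vec m"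
  shows "x \<bullet> ((B * transpose_mat B) *\<^sub>v x) = (transpose_mat B *\<^sub>v x) \<bullet> (transpose_mat B *\<^sub>v x)"
  using B x by (simp add: transpose_vec_mult_scalar[of B m k _ x] comm_scalar_prod[of x m])

lemma symm_mat_bilinear_comm:
  fixes X :: "real mat"
  assumes X: "symm_mat m X" and u: "u \<in> carrier_vec m" and w: "w \<in> carrier_vec m"
  shows "u \<bullet> (X *\<^sub>v w) = w \<bullet> (X *\<^sub>v u)"
proof -
  have Xc: "X \<in> carrier_mat m m" and XT: "transpose_mat X = X"
    using X unfolding symm_mat_def by auto
  have "u \<bullet> (X *\<^sub>v w) = (transpose_mat X *\<^sub>v u) \<bullet> w"
    using transpose_vec_mult_scalar[OF Xc w u] by simp
  also have "\<dots> = w \<bullet> (X *\<^sub>v u)"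
    unfolding XT using Xc u w by (simp add: comm_scalar_prod[of _ m])
  finally show ?thesis .
qed

lemma psd_mat_add:
  assumes A: "psd_mat m A" and B: "psd_mat m B"
  shows "psd_mat m (A + B)"
proof -
  have c: "A \<in> carrier_mat m m" "B \<in> carrier_mat m m"
    using A B unfolding psd_mat_def symm_mat_def by auto
  have "transpose_mat (A + B) = A + B"
    using A B c unfolding psd_mat_def symm_mat_def by (simp add: transpose_add)
  moreover have "0 \<le> x \<bullet> ((A + B) *\<^sub>v x)" if "x \<in> carrier_vec m" for x
    using A B that unfolding quad_form_add[OF c that] psd_mat_def by simp
  ultimately show ?thesis using c unfolding psd_mat_def symm_mat_def by simp
qed

lemma psd_mat_smult:
  assumes A: "psd_mat m A" and t: "0 \<le> t"
  shows "psd_mat m (t \<cdot>\<^sub>m A)"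
proof -
  have c: "A \<in> carrier_mat m m" using A unfolding psd_mat_def symm_mat_def by simp
  have "transpose_mat (t \<cdot>\<^sub>m A) = t \<cdot>\<^sub>m transpose_mat A"
    by (rule eq_matI) auto
  then have "transpose_mat (t \<cdot>\<^sub>m A) = t \<cdot>\<^sub>m A"
    using A unfolding psd_mat_def symm_mat_def by simp
  then show ?thesis
    using A t c unfolding psd_mat_def symm_mat_def by (simp add: quad_form_smult)
qed

lemma psd_mat_one: "psd_mat m (1\<^sub>m m :: real mat)"
  unfolding psd_mat_def symm_mat_def by (simp add: scalar_prod_def sum_nonneg)

lemma psd_mat_gram:
  fixes B :: "real mat"
  assumes B: "B \<in> carrier_mat m k"
  shows "psd_mat m (B * transpose_mat B)"
proof -
  have "0 \<le> x \<bullet> ((B * transpose_mat B) *\<^sub>v x)" if "x \<in> carrier_vec m" for x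
    unfolding quad_form_gram[OF B that] by (simp add: scalar_prod_def sum_nonneg)
  then show ?thesis using B unfolding psd_mat_def symm_mat_def by (simp add: transpose_mult)
qed

lemma psd_mat_outer:
  fixes w :: "real vec"
  assumes w: "w \<in> carrier_vec m" and c: "0 \<le> c"
  shows "psd_mat m (mat m m (\<lambda>(a,b). c * w $ a * w $ b))"
proof -
  have "x \<bullet> (mat m m (\<lambda>(a,b). c * w $ a * w $ b) *\<^sub>v x) = c * (x \<bullet> w)^2"
    if "x \<in> carrier_vec m" for x
    using w that by (simp add: scalar_prod_def atLeast0LessThan power2_eq_square
        sum_distrib_left sum_product algebra_simps)
  then show ?thesis
    using c unfolding psd_mat_def symm_mat_def by (auto intro!: eq_matI)
qed

lemma mtrace_mult_outer:
  fixes X :: "real mat"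
  assumes X: "X \<in> carrier_mat m m" and w: "w \<in> carrier_vec m"
  shows "mtrace (X * mat m m (\<lambda>(a,b). c * w $ a * w $ b)) = c * (w \<bullet> (X *\<^sub>v w))"
  using X w unfolding mtrace_def
  by (simp add: scalar_prod_def atLeast0LessThan sum_distrib_left algebra_simps)

section \<open>The Frobenius distance to a rank-two perturbation\<close>

lemma fro_sq_nonneg: "0 \<le> fro_sq A"
  unfolding fro_sq_def by (simp add: sum_nonneg)

lemma fro_sq_diff_eq_0_iff:
  fixes A B :: "real mat"
  assumes A: "A \<in> carrier_mat r c" and B: "B \<in> carrier_mat r c"
  shows "fro_sq (A - B) = 0 \<longleftrightarrow> A = B"
proof -
  have "fro_sq (A - B) = 0 \<longleftrightarrow> (\<forall>a<r. \<forall>b<c. A $$ (a,b) = B $$ (a,b))"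
    using A B by (auto simp: fro_sq_def sum_nonneg_eq_0_iff sum_nonneg)
  then show ?thesis using A B by (auto intro!: eq_matI)
qed

lemma fro_sq_smult: "fro_sq (t \<cdot>\<^sub>m A) = t^2 * fro_sq A"
  unfolding fro_sq_def by (simp add: sum_distrib_left power_mult_distrib)

lemma sum_sum_delta:
  fixes f :: "nat \<Rightarrow> nat \<Rightarrow> 'a::comm_monoid_add"
  assumes "i < n" "j < n"
  shows "(\<Sum>a<n. \<Sum>b<n. if a = i \<and> b = j then f a b else 0) = f i j"
proof -
  have "(\<Sum>a<n. \<Sum>b<n. if a = i \<and> b = j then f a b else 0)
      = (\<Sum>a<n. if a = i then \<Sum>b<n. if b = j then f a b else 0 else 0)"
    by (intro sum.cong) auto
  then show ?thesis using assms by simp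
qed

lemma dim_Emat [simp]: "dim_row (Emat n i j) = n" "dim_col (Emat n i j) = n"
  unfolding Emat_def by simp_all

lemma fro_sq_minus_Emat:
  fixes A :: "real mat"
  assumes A: "A \<in> carrier_mat n n" and sym: "A $$ (i,j) = A $$ (j,i)"
    and ij: "i \<noteq> j" "i < n" "j < n"
  shows "fro_sq (A - \<alpha> \<cdot>\<^sub>m Emat n i j) = fro_sq A - 4 * \<alpha> * A $$ (i,j) + 2 * \<alpha>^2"
proof -
  define c where "c a b = \<alpha>^2 - 2 * \<alpha> * A $$ (a,b)" for a b
  have "fro_sq (A - \<alpha> \<cdot>\<^sub>m Emat n i j) = (\<Sum>a<n. \<Sum>b<n.
      (A $$ (a,b))^2 + (if a = i \<and> b = j then c a b else 0) + (if a = j \<and> b = i then c a b else 0))"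
    unfolding fro_sq_def using A ij
    by (intro sum.cong) (auto simp: Emat_def c_def power2_eq_square algebra_simps)
  also have "\<dots> = fro_sq A + c i j + c j i"
    using A ij unfolding fro_sq_def by (simp add: sum.distrib sum_sum_delta)
  finally show ?thesis using sym by (simp add: c_def)
qed

lemma fro_sq_shift_minus_Emat:
  fixes A B :: "real mat"
  assumes A: "A \<in> carrier_mat n n" and B: "B \<in> carrier_mat n n" and sym: "B $$ (i,j) = B $$ (j,i)"
    and ij: "i \<noteq> j" "i < n" "j < n"
  shows "fro_sq (A + t \<cdot>\<^sub>m B - (A + \<alpha> \<cdot>\<^sub>m Emat n i j))
    = t^2 * fro_sq B - 4 * \<alpha> * B $$ (i,j) * t + 2 * \<alpha>^2"
proof -
  have "A + t \<cdot>\<^sub>m B - (A + \<alpha> \<cdot>\<^sub>m Emat n i j) = t \<cdot>\<^sub>m B - \<alpha> \<cdot>\<^sub>m Emat n i j"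
    using A B by (intro eq_matI) auto
  moreover have "fro_sq (t \<cdot>\<^sub>m B - \<alpha> \<cdot>\<^sub>m Emat n i j) = fro_sq (t \<cdot>\<^sub>m B) - 4 * \<alpha> * (t * B $$ (i,j)) + 2 * \<alpha>^2"
    using fro_sq_minus_Emat[of "t \<cdot>\<^sub>m B" n i j \<alpha>] B sym ij by simp
  ultimately show ?thesis by (simp add: fro_sq_smult)
qed

lemma coeff_nonpos_if_quadratic_bound:
  fixes Q c :: real
  assumes Q: "0 \<le> Q" and bound: "\<And>t. 0 < t \<Longrightarrow> t \<le> 1 \<Longrightarrow> c * t \<le> t^2 * Q"
  shows "c \<le> 0"
proof (rule ccontr)
  assume "\<not> c \<le> 0"
  then have c: "0 < c" by simp
  define t where "t = c / (Q + c)"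
  have t: "0 < t" "t \<le> 1" using Q c unfolding t_def by auto
  have "c \<le> t * Q" using bound[OF t] t(1) by (simp add: power2_eq_square)
  also have "t * Q < c" using Q c unfolding t_def by (simp add: field_simps)
  finally show False by simp
qed

section \<open>The Lindenstrauss operator and its adjoint\<close>

lemma dim_KV [simp]: "dim_row (KV V X) = dim_row V" "dim_col (KV V X) = dim_row V"
  unfolding KV_def lindK_def by simp_all

lemma KV_carrier: "V \<in> carrier_mat n m \<Longrightarrow> KV V X \<in> carrier_mat n n"
  by (metis carrier_matD(1) carrier_matI dim_KV)

lemma index_KV_rows:
  fixes V X :: "real mat"
  assumes V: "V \<in> carrier_mat n m" and X: "X \<in> carrier_mat m m" and ab: "a < n" "b < n"
  shows "KV V X $$ (a,b) = row V a \<bullet> (X *\<^sub>v row V a) + row V b \<bullet> (X *\<^sub>v row V b)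
    - 2 * (row V a \<bullet> (X *\<^sub>v row V b))"
proof -
  have "V * X * transpose_mat V = V * (X * transpose_mat V)"
    using V X by (simp add: assoc_mult_mat[of _ n m _ m _ n])
  then have "(V * X * transpose_mat V) $$ (c,d) = row V c \<bullet> (X *\<^sub>v row V d)"
    if "c < n" "d < n" for c d
    using V X that by (simp add: mult_mat_vec_def)
  then show ?thesis using V ab by (simp add: KV_def lindK_def)
qed

lemma index_KV:
  fixes V X :: "real mat"
  assumes V: "V \<in> carrier_mat n m" and X: "symm_mat m X" and ab: "a < n" "b < n"
  shows "KV V X $$ (a,b) = (row V a - row V b) \<bullet> (X *\<^sub>v (row V a - row V b))"
proof -
  have Xc: "X \<in> carrier_mat m m" using X by (rule symm_mat_carrier)
  have r: "row V a \<in> carrier_vec m" "row V b \<in> carrier_vec m" using V ab by auto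
  have "(row V a - row V b) \<bullet> (X *\<^sub>v (row V a - row V b))
      = row V a \<bullet> (X *\<^sub>v row V a) + row V b \<bullet> (X *\<^sub>v row V b)
        - row V a \<bullet> (X *\<^sub>v row V b) - row V b \<bullet> (X *\<^sub>v row V a)"
    using Xc r by (simp add: mult_minus_distrib_mat_vec scalar_prod_minus_distrib[of _ m]
        minus_scalar_prod_distrib[of _ m] algebra_simps)
  then show ?thesis
    using symm_mat_bilinear_comm[OF X r] index_KV_rows[OF V Xc ab] by simp
qed

lemma KV_nonneg:
  fixes V X :: "real mat"
  assumes V: "V \<in> carrier_mat n m" and X: "psd_mat m X" and ab: "a < n" "b < n"
  shows "0 \<le> KV V X $$ (a,b)"
  using X V ab unfolding index_KV[OF V psd_mat_symm[OF X] ab] psd_mat_def by simp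

lemma KV_symmetric:
  fixes V X :: "real mat"
  assumes V: "V \<in> carrier_mat n m" and X: "symm_mat m X" and ab: "a < n" "b < n"
  shows "KV V X $$ (a,b) = KV V X $$ (b,a)"
  using index_KV_rows[OF V symm_mat_carrier[OF X]] ab V
    symm_mat_bilinear_comm[OF X, of "row V a" "row V b"] by simp

lemma KV_add:
  fixes V X Y :: "real mat"
  assumes V: "V \<in> carrier_mat n m" and X: "X \<in> carrier_mat m m" and Y: "Y \<in> carrier_mat m m"
  shows "KV V (X + Y) = KV V X + KV V Y"
proof -
  have "V * (X + Y) * transpose_mat V = V * X * transpose_mat V + V * Y * transpose_mat V"
    using V X Y by (simp add: mult_add_distrib_mat[of _ n m] add_mult_distrib_mat[of _ n m])
  then show ?thesis
    using V unfolding KV_def lindK_def by (intro eq_matI) auto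
qed

lemma KV_smult:
  fixes V X :: "real mat"
  assumes V: "V \<in> carrier_mat n m" and X: "X \<in> carrier_mat m m"
  shows "KV V (t \<cdot>\<^sub>m X) = t \<cdot>\<^sub>m KV V X"
proof -
  have "V * (t \<cdot>\<^sub>m X) * transpose_mat V = t \<cdot>\<^sub>m (V * X * transpose_mat V)"
    using V X by (simp add: mult_smult_distrib[of _ n m] mult_smult_assoc_mat[of _ n m])
  then show ?thesis
    using V unfolding KV_def lindK_def by (intro eq_matI) (auto simp: algebra_simps)
qed

lemma lindK_eq_0_imp_zero:
  fixes G :: "real mat"
  assumes G: "G \<in> carrier_mat n n" and centred: "\<And>a. a < n \<Longrightarrow> (\<Sum>b<n. G $$ (a,b)) = 0"
    and K0: "lindK n G = 0\<^sub>m n n"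
  shows "G = 0\<^sub>m n n"
proof -
  have eq: "G $$ (a,a) + G $$ (b,b) = 2 * G $$ (a,b)" if "a < n" "b < n" for a b
    using arg_cong[OF K0, of "\<lambda>M. M $$ (a,b)"] that unfolding lindK_def by simp
  \<comment> \<open>Summing \<open>eq\<close> over \<open>b\<close>, and then over \<open>a\<close>, shows that the trace and the diagonal vanish.\<close>
  define T where "T = (\<Sum>b<n. G $$ (b,b))"
  have row: "real n * G $$ (a,a) + T = 0" if a: "a < n" for a
  proof -
    have "real n * G $$ (a,a) + T = (\<Sum>b<n. G $$ (a,a) + G $$ (b,b))"
      unfolding T_def by (simp add: sum.distrib)
    also have "\<dots> = (\<Sum>b<n. 2 * G $$ (a,b))"
      using eq a by (intro sum.cong) auto
    also have "\<dots> = 0" using centred a by (simp add: sum_distrib_left[symmetric])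
    finally show ?thesis .
  qed
  have "2 * real n * T = (\<Sum>a<n. real n * G $$ (a,a) + T)"
    by (simp add: sum.distrib sum_distrib_left[symmetric] T_def)
  also have "\<dots> = 0" using row by simp
  finally have "n = 0 \<or> T = 0" by simp
  then have "G $$ (a,a) = 0" if "a < n" for a
    using row[OF that] that by (cases "n = 0") auto
  then have "G $$ (a,b) = 0" if "a < n" "b < n" for a b
    using eq[OF that] that by simp
  then show ?thesis using G by (intro eq_matI) auto
qed

lemma lindK_adj_Emat:
  assumes ij: "i \<noteq> j" "i < n" "j < n"
  defines "u \<equiv> unit_vec n i - unit_vec n j"
  shows "lindK_adj n (Emat n i j) = mat n n (\<lambda>(a,b). 2 * u $ a * u $ b)"
proof (rule eq_matI)
  fix a b assume "a < dim_row (mat n n (\<lambda>(a,b). 2 * u $ a * u $ b))"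
    "b < dim_col (mat n n (\<lambda>(a,b). 2 * u $ a * u $ b))"
  then have ab: "a < n" "b < n" by auto
  have "(\<Sum>c<n. Emat n i j $$ (a,c))
      = (\<Sum>c<n. (if c = j then (if a = i then 1 else 0) else 0) + (if c = i then (if a = j then 1 else 0) else 0))"
    using ab unfolding Emat_def by (intro sum.cong) auto
  then have "(\<Sum>c<n. Emat n i j $$ (a,c)) = (if a = i then 1 else 0) + (if a = j then 1 else 0)"
    using ij by (simp add: sum.distrib)
  then show "lindK_adj n (Emat n i j) $$ (a,b) = mat n n (\<lambda>(a,b). 2 * u $ a * u $ b) $$ (a,b)"
    using ab ij unfolding lindK_adj_def u_def by (auto simp: Emat_def)
qed (auto simp: lindK_adj_def)

lemma congruence_outer_product:
  fixes V :: "real mat"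
  assumes V: "V \<in> carrier_mat n m" and u: "u \<in> carrier_vec n"
  defines "w \<equiv> transpose_mat V *\<^sub>v u"
  shows "transpose_mat V * mat n n (\<lambda>(a,b). c * u $ a * u $ b) * V = mat m m (\<lambda>(k,l). c * w $ k * w $ l)"
proof (rule eq_matI)
  fix k l assume "k < dim_row (mat m m (\<lambda>(k,l). c * w $ k * w $ l))"
    "l < dim_col (mat m m (\<lambda>(k,l). c * w $ k * w $ l))"
  then have kl: "k < m" "l < m" by auto
  have "(transpose_mat V * mat n n (\<lambda>(a,b). c * u $ a * u $ b) * V) $$ (k,l)
      = (\<Sum>b<n. (\<Sum>a<n. V $$ (a,k) * (c * u $ a * u $ b)) * V $$ (b,l))"
    using V u kl by (simp add: scalar_prod_def atLeast0LessThan)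
  also have "\<dots> = (\<Sum>b<n. \<Sum>a<n. c * (V $$ (a,k) * u $ a) * (V $$ (b,l) * u $ b))"
    by (simp add: sum_distrib_left sum_distrib_right mult_ac)
  also have "\<dots> = c * (\<Sum>a<n. V $$ (a,k) * u $ a) * (\<Sum>b<n. V $$ (b,l) * u $ b)"
    by (subst sum.swap) (simp add: sum_product sum_distrib_left mult_ac)
  finally show "(transpose_mat V * mat n n (\<lambda>(a,b). c * u $ a * u $ b) * V) $$ (k,l)
      = mat m m (\<lambda>(k,l). c * w $ k * w $ l) $$ (k,l)"
    using V u kl unfolding w_def by (simp add: scalar_prod_def atLeast0LessThan)
qed (use V in auto)

lemma KV_adj_Emat:
  fixes V :: "real mat"
  assumes V: "V \<in> carrier_mat n m" and ij: "i \<noteq> j" "i < n" "j < n"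
  defines "w \<equiv> row V i - row V j"
  shows "KV_adj V (Emat n i j) = mat m m (\<lambda>(k,l). 2 * w $ k * w $ l)"
proof -
  have "transpose_mat V *\<^sub>v (unit_vec n i - unit_vec n j) = w"
    using V ij unfolding w_def by (intro eq_vecI) (auto simp: scalar_prod_minus_distrib[of _ n])
  then show ?thesis
    using V congruence_outer_product[OF V, of "unit_vec n i - unit_vec n j" 2]
    by (simp add: KV_adj_def lindK_adj_Emat[OF ij])
qed

section \<open>Centred orthonormal frames\<close>

locale centred_frame =
  fixes n m :: nat and V :: "real mat"
  assumes carrier: "V \<in> carrier_mat n m"
    and orthonormal: "transpose_mat V * V = 1\<^sub>m m"
    and centred: "\<And>k. k < m \<Longrightarrow> (\<Sum>a<n. V $$ (a,k)) = 0"
    and row_products: "\<And>a b. a < n \<Longrightarrow> b < n \<Longrightarrow>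
      row V a \<bullet> row V b = (if a = b then 1 else 0) - 1 / real n"

lemma centred_frameI_bordered_orthogonal:
  fixes n :: nat and V :: "real mat"
  defines "Q \<equiv> mat n n (\<lambda>(a,b). if b < n - 1 then V $$ (a,b) else 1 / sqrt (real n))"
  assumes n: "0 < n" and V: "V \<in> carrier_mat n (n - 1)" and orth: "transpose_mat Q * Q = 1\<^sub>m n"
  shows "centred_frame n (n - 1) V"
proof
  have Qc: "Q \<in> carrier_mat n n" unfolding Q_def by simp
  have QQT: "Q * transpose_mat Q = 1\<^sub>m n"
    by (rule mat_mult_left_right_inverse[OF _ Qc orth]) (use Qc in simp)
  have cols: "(\<Sum>a<n. Q $$ (a,k) * Q $$ (a,l)) = (if k = l then 1 else 0)" if "k < n" "l < n" for k l
    using arg_cong[OF orth, of "\<lambda>M. M $$ (k,l)"] that Qc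
    by (simp add: scalar_prod_def atLeast0LessThan)
  have rows: "(\<Sum>c<n. Q $$ (a,c) * Q $$ (b,c)) = (if a = b then 1 else 0)" if "a < n" "b < n" for a b
    using arg_cong[OF QQT, of "\<lambda>M. M $$ (a,b)"] that Qc
    by (simp add: scalar_prod_def atLeast0LessThan)
  have Qe: "Q $$ (a,b) = (if b < n - 1 then V $$ (a,b) else 1 / sqrt (real n))" if "a < n" "b < n" for a b
    using that unfolding Q_def by simp
  show "V \<in> carrier_mat n (n - 1)" by (rule V)
  have "(\<Sum>a<n. V $$ (a,k) * V $$ (a,l)) = (if k = l then 1 else 0)" if "k < n - 1" "l < n - 1" for k l
    using cols[of k l] that Qe by simp
  then show "transpose_mat V * V = 1\<^sub>m (n - 1)"
    using V by (intro eq_matI) (auto simp: scalar_prod_def atLeast0LessThan)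
  show "(\<Sum>a<n. V $$ (a,k)) = 0" if "k < n - 1" for k
  proof -
    have "(\<Sum>a<n. V $$ (a,k)) / sqrt (real n) = (\<Sum>a<n. Q $$ (a,k) * Q $$ (a,n-1))"
      using that Qe by (simp add: sum_divide_distrib)
    also have "\<dots> = 0" using cols[of k "n - 1"] that by simp
    finally show ?thesis using n by simp
  qed
  show "row V a \<bullet> row V b = (if a = b then 1 else 0) - 1 / real n" if "a < n" "b < n" for a b
  proof -
    have "(\<Sum>c<n. Q $$ (a,c) * Q $$ (b,c))
        = (\<Sum>c<n - 1. Q $$ (a,c) * Q $$ (b,c)) + Q $$ (a,n-1) * Q $$ (b,n-1)"
      using sum.lessThan_Suc[of "\<lambda>c. Q $$ (a,c) * Q $$ (b,c)" "n - 1"] n by simp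
    also have "\<dots> = row V a \<bullet> row V b + 1 / real n"
    proof -
      have "(\<Sum>c<n - 1. Q $$ (a,c) * Q $$ (b,c)) = row V a \<bullet> row V b"
        using that Qe V by (simp add: scalar_prod_def atLeast0LessThan)
      moreover have "Q $$ (a,n-1) * Q $$ (b,n-1) = 1 / real n"
        using that Qe by simp
      ultimately show ?thesis by simp
    qed
    finally show ?thesis using rows[OF that] by simp
  qed
qed

context centred_frame
begin

lemma sandwich_row_sums_zero:
  assumes X: "X \<in> carrier_mat m m" and a: "a < n"
  shows "(\<Sum>b<n. (V * X * transpose_mat V) $$ (a,b)) = 0"
proof -
  have "(\<Sum>b<n. (V * X * transpose_mat V) $$ (a,b))
      = (\<Sum>b<n. \<Sum>k<m. \<Sum>l<m. V $$ (a,k) * X $$ (k,l) * V $$ (b,l))"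
    using carrier X a
    by (intro sum.cong refl) (simp add: scalar_prod_def atLeast0LessThan sum_distrib_left sum_distrib_right mult.assoc)
  also have "\<dots> = (\<Sum>k<m. \<Sum>l<m. V $$ (a,k) * X $$ (k,l) * (\<Sum>b<n. V $$ (b,l)))"
    by (simp add: sum_distrib_left sum.swap[of _ "{..<n}"])
  also have "\<dots> = 0" by (simp add: centred)
  finally show ?thesis .
qed

lemma KV_eq_0_imp_zero:
  assumes X: "X \<in> carrier_mat m m" and K0: "KV V X = 0\<^sub>m n n"
  shows "X = 0\<^sub>m m m"
proof -
  define G where "G = V * X * transpose_mat V"
  have Gc: "G \<in> carrier_mat n n" unfolding G_def using carrier X by simp
  have "G = 0\<^sub>m n n"
    using lindK_eq_0_imp_zero[OF Gc] sandwich_row_sums_zero[OF X] K0 carrier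
    unfolding G_def KV_def by simp
  moreover have "X = transpose_mat V * G * V"
  proof -
    have Vt: "transpose_mat V \<in> carrier_mat m n" using carrier by simp
    have VX: "V * X \<in> carrier_mat n m" using carrier X by simp
    have "transpose_mat V * G = (transpose_mat V * (V * X)) * transpose_mat V"
      unfolding G_def using assoc_mult_mat[OF Vt VX] Vt by simp
    also have "transpose_mat V * (V * X) = X"
      using assoc_mult_mat[OF Vt carrier X, symmetric] X by (simp add: orthonormal)
    finally have "transpose_mat V * G * V = X * (transpose_mat V * V)"
      using assoc_mult_mat[OF X Vt carrier] by simp
    then show ?thesis using X by (simp add: orthonormal)
  qed
  ultimately show ?thesis using carrier by simp
qed

lemma KV_inj:
  assumes X: "X \<in> carrier_mat m m" and Y: "Y \<in> carrier_mat m m" and eq: "KV V X = KV V Y"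
  shows "X = Y"
proof -
  have "KV V (X + (-1) \<cdot>\<^sub>m Y) = 0\<^sub>m n n"
    using carrier X Y eq by (simp add: KV_add KV_smult) (intro eq_matI, auto)
  then have "X + (-1) \<cdot>\<^sub>m Y = 0\<^sub>m m m"
    using X Y by (intro KV_eq_0_imp_zero) auto
  then have "(X + (-1) \<cdot>\<^sub>m Y) $$ (k,l) = 0" if "k < m" "l < m" for k l
    using that by simp
  then show ?thesis using X Y by (intro eq_matI) auto
qed

lemma mult_row_diff:
  assumes "a < n" "b < n"
  shows "V *\<^sub>v (row V a - row V b) = unit_vec n a - unit_vec n b"
  using assms carrier
  by (intro eq_vecI) (auto simp: scalar_prod_minus_distrib[of _ m] row_products)

lemma row_diff_norm:
  assumes "a < n" "b < n" "a \<noteq> b"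
  shows "(row V a - row V b) \<bullet> (row V a - row V b) = 2"
  using assms carrier
  by (simp add: scalar_prod_minus_distrib[of _ m] minus_scalar_prod_distrib[of _ m]
      comm_scalar_prod[of "row V b" m] row_products)

lemma KV_adj_Emat_psd:
  assumes "i \<noteq> j" "i < n" "j < n"
  shows "psd_mat m (KV_adj V (Emat n i j))"
  using KV_adj_Emat[OF carrier assms] psd_mat_outer[of "row V i - row V j" m 2] carrier assms
  by simp

lemma mtrace_mult_KV_adj_Emat:
  assumes X: "symm_mat m X" and ij: "i \<noteq> j" "i < n" "j < n"
  shows "mtrace (X * KV_adj V (Emat n i j)) = 2 * KV V X $$ (i,j)"
  using mtrace_mult_outer[OF symm_mat_carrier[OF X], of "row V i - row V j" 2]
    index_KV[OF carrier X ij(2,3)] KV_adj_Emat[OF carrier ij] carrier ij by simp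

lemma KV_adj_Emat_nonzero:
  assumes "i \<noteq> j" "i < n" "j < n"
  shows "KV_adj V (Emat n i j) \<noteq> 0\<^sub>m m m"
proof
  assume "KV_adj V (Emat n i j) = 0\<^sub>m m m"
  then have "mtrace (1\<^sub>m m * KV_adj V (Emat n i j)) = 0" by (simp add: mtrace_def)
  moreover have "mtrace (1\<^sub>m m * KV_adj V (Emat n i j)) = 4"
    using mtrace_mult_KV_adj_Emat[OF psd_mat_symm[OF psd_mat_one] assms]
      index_KV[OF carrier psd_mat_symm[OF psd_mat_one]] row_diff_norm[of i j] carrier assms by simp
  ultimately show False by simp
qed

lemma EDM_imp_KV_psd:
  assumes "EDM n D"
  shows "\<exists>X. psd_mat m X \<and> KV V X = D"
proof -
  have D: "D \<in> carrier_mat n n" using assms unfolding EDM_def by simp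
  obtain k :: nat and p :: "nat \<Rightarrow> nat \<Rightarrow> real" where Dp: "\<forall>a<n. \<forall>b<n. D $$ (a,b) = (\<Sum>r<k. (p a r - p b r)^2)"
    using assms unfolding EDM_def by blast
  \<comment> \<open>Schoenberg: \<open>X = V\<^sup>T P P\<^sup>T V\<close> for the matrix \<open>P\<close> of points, because \<open>V (v\<^sub>a - v\<^sub>b) = e\<^sub>a - e\<^sub>b\<close>.\<close>
  define P where "P = mat n k (\<lambda>(c,r). p c r)"
  define B where "B = transpose_mat V * P"
  have Pc: "P \<in> carrier_mat n k" and Bc: "B \<in> carrier_mat m k"
    unfolding P_def B_def using carrier by auto
  have psd: "psd_mat m (B * transpose_mat B)" by (rule psd_mat_gram[OF Bc])
  have "KV V (B * transpose_mat B) $$ (a,b) = D $$ (a,b)" if ab: "a < n" "b < n" for a b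
  proof -
    let ?d = "row V a - row V b"
    have d: "?d \<in> carrier_vec m" using carrier ab by auto
    have "transpose_mat B *\<^sub>v ?d = transpose_mat P *\<^sub>v (unit_vec n a - unit_vec n b)"
      unfolding B_def using carrier Pc d ab
      by (simp add: transpose_mult[of _ m n] mult_row_diff)
    also have "\<dots> = vec k (\<lambda>r. p a r - p b r)"
      using Pc ab unfolding P_def
      by (intro eq_vecI) (auto simp: scalar_prod_minus_distrib[of _ n])
    finally have "KV V (B * transpose_mat B) $$ (a,b) = vec k (\<lambda>r. p a r - p b r) \<bullet> vec k (\<lambda>r. p a r - p b r)"
      using index_KV[OF carrier psd_mat_symm[OF psd] ab] quad_form_gram[OF Bc d] by simp
    then show ?thesis using Dp ab by (simp add: scalar_prod_def power2_eq_square atLeast0LessThan)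
  qed
  then have "KV V (B * transpose_mat B) = D" using D carrier by (intro eq_matI) auto
  then show ?thesis using psd by blast
qed

lemma KV_pinv_KV:
  assumes X: "symm_mat m X"
  shows "KV_pinv V (KV V X) = X"
proof -
  define LS where "LS = {Y. symm_mat m Y \<and>
    (\<forall>Z. symm_mat m Z \<longrightarrow> fro_sq (KV V Y - KV V X) \<le> fro_sq (KV V Z - KV V X))}"
  have res0: "fro_sq (KV V X - KV V X) = 0"
    by (simp add: fro_sq_def)
  have uniq: "Y = X" if "Y \<in> LS" for Y
  proof -
    have Y: "symm_mat m Y" and "fro_sq (KV V Y - KV V X) \<le> 0"
      using that X res0 unfolding LS_def by auto
    then have "KV V Y = KV V X"
      using fro_sq_nonneg[of "KV V Y - KV V X"] KV_carrier[OF carrier]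
      by (simp add: fro_sq_diff_eq_0_iff[of _ n n])
    then show ?thesis using KV_inj symm_mat_carrier X Y by blast
  qed
  have XLS: "X \<in> LS" using X res0 fro_sq_nonneg unfolding LS_def by simp
  have "KV_pinv V (KV V X) = (THE Y. Y \<in> LS \<and> (\<forall>Z \<in> LS. fro_sq Y \<le> fro_sq Z))"
    unfolding KV_pinv_def Let_def LS_def carrier_matD(2)[OF carrier] ..
  also have "\<dots> = X"
    by (rule the_equality) (use uniq XLS in blast)+
  finally show ?thesis .
qed

end

section \<open>Nearest positive semidefinite points\<close>

definition KV_nearest_psd :: "real mat \<Rightarrow> real mat \<Rightarrow> real mat \<Rightarrow> bool" where
  "KV_nearest_psd V D X \<longleftrightarrow> psd_mat (dim_col V) X \<and>
     (\<forall>Z. psd_mat (dim_col V) Z \<longrightarrow> fro_sq (KV V X - D) \<le> fro_sq (KV V Z - D))"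

context centred_frame
begin

lemma nearest_perturbation_bound:
  assumes ij: "i \<noteq> j" "i < n" "j < n"
    and near: "KV_nearest_psd V (KV V X + \<alpha> \<cdot>\<^sub>m Emat n i j) X"
    and Z: "psd_mat m Z" and KZ: "KV V Z = KV V X + t \<cdot>\<^sub>m B"
    and B: "B \<in> carrier_mat n n" and sym: "B $$ (i,j) = B $$ (j,i)"
  shows "4 * \<alpha> * B $$ (i,j) * t \<le> t^2 * fro_sq B"
proof -
  let ?A = "KV V X"
  have A: "?A \<in> carrier_mat n n" by (rule KV_carrier[OF carrier])
  have "fro_sq (?A - (?A + \<alpha> \<cdot>\<^sub>m Emat n i j)) = 2 * \<alpha>^2"
    using fro_sq_shift_minus_Emat[OF A zero_carrier_mat _ ij, of 0 \<alpha>] A ij by simp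
  moreover have "fro_sq (?A - (?A + \<alpha> \<cdot>\<^sub>m Emat n i j)) \<le> fro_sq (KV V Z - (?A + \<alpha> \<cdot>\<^sub>m Emat n i j))"
    using near Z carrier unfolding KV_nearest_psd_def by simp
  ultimately show ?thesis
    unfolding KZ fro_sq_shift_minus_Emat[OF A B sym ij] by simp
qed

lemma nearest_imp_nonpos:
  assumes ij: "i \<noteq> j" "i < n" "j < n"
    and near: "KV_nearest_psd V (KV V X + \<alpha> \<cdot>\<^sub>m Emat n i j) X"
  shows "\<alpha> \<le> 0"
proof -
  \<comment> \<open>Moving along \<open>I\<close> changes \<open>K\<^sub>V(X)\<^sub>i\<^sub>j\<close> at the rate \<open>|v\<^sub>i - v\<^sub>j|\<^sup>2 = 2 > 0\<close>.\<close>
  let ?B = "KV V (1\<^sub>m m)"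
  have X: "psd_mat m X" using near carrier unfolding KV_nearest_psd_def by simp
  have Xc: "X \<in> carrier_mat m m" using symm_mat_carrier[OF psd_mat_symm[OF X]] .
  have B: "?B \<in> carrier_mat n n" by (rule KV_carrier[OF carrier])
  have Bij: "?B $$ (i,j) = 2"
    using index_KV[OF carrier psd_mat_symm[OF psd_mat_one] ij(2,3)] row_diff_norm[OF ij(2,3,1)]
      carrier ij by simp
  have "8 * \<alpha> * t \<le> t^2 * fro_sq ?B" if "0 < t" for t
  proof -
    have "psd_mat m (X + t \<cdot>\<^sub>m 1\<^sub>m m)"
      using X psd_mat_one that by (simp add: psd_mat_add psd_mat_smult)
    moreover have "KV V (X + t \<cdot>\<^sub>m 1\<^sub>m m) = KV V X + t \<cdot>\<^sub>m ?B"
      using carrier Xc by (simp add: KV_add KV_smult)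
    ultimately show ?thesis
      using nearest_perturbation_bound[OF ij near _ _ B] KV_symmetric[OF carrier psd_mat_symm[OF psd_mat_one] ij(2,3)]
      Bij by simp
  qed
  then have "8 * \<alpha> \<le> 0"
    by (intro coeff_nonpos_if_quadratic_bound[OF fro_sq_nonneg[of ?B]]) simp
  then show ?thesis by simp
qed

lemma nearest_imp_entry_zero:
  assumes ij: "i \<noteq> j" "i < n" "j < n"
    and near: "KV_nearest_psd V (KV V X + \<alpha> \<cdot>\<^sub>m Emat n i j) X"
  shows "\<alpha> * KV V X $$ (i,j) = 0"
proof -
  let ?B = "KV V X"
  have X: "psd_mat m X" using near carrier unfolding KV_nearest_psd_def by simp
  have Xc: "X \<in> carrier_mat m m" using symm_mat_carrier[OF psd_mat_symm[OF X]] .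
  have B: "?B \<in> carrier_mat n n" by (rule KV_carrier[OF carrier])
  have sym: "?B $$ (i,j) = ?B $$ (j,i)" by (rule KV_symmetric[OF carrier psd_mat_symm[OF X] ij(2,3)])
  have bound: "4 * \<alpha> * ?B $$ (i,j) * t \<le> t^2 * fro_sq ?B" if "-1 \<le> t" for t
  proof -
    have "psd_mat m ((1 + t) \<cdot>\<^sub>m X)" using X that by (simp add: psd_mat_smult)
    moreover have "KV V ((1 + t) \<cdot>\<^sub>m X) = KV V X + t \<cdot>\<^sub>m ?B"
      unfolding KV_smult[OF carrier Xc] using B by (intro eq_matI) (auto simp: algebra_simps)
    ultimately show ?thesis using nearest_perturbation_bound[OF ij near _ _ B sym] by simp
  qed
  have "4 * \<alpha> * ?B $$ (i,j) \<le> 0"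
    using bound by (intro coeff_nonpos_if_quadratic_bound[OF fro_sq_nonneg[of ?B]]) simp
  moreover have "- (4 * \<alpha> * ?B $$ (i,j)) \<le> 0"
    using bound[of "- _"] by (intro coeff_nonpos_if_quadratic_bound[OF fro_sq_nonneg[of ?B]]) simp
  ultimately show ?thesis by simp
qed

lemma zero_entry_imp_nearest_eq:
  assumes ij: "i \<noteq> j" "i < n" "j < n"
    and X0: "psd_mat m X0" and D0ij: "KV V X0 $$ (i,j) = 0" and \<alpha>: "\<alpha> < 0"
    and near: "KV_nearest_psd V (KV V X0 + \<alpha> \<cdot>\<^sub>m Emat n i j) X"
  shows "KV V X = KV V X0"
proof -
  let ?D = "KV V X0" and ?F = "KV V X - KV V X0"
  have X: "psd_mat m X" using near carrier unfolding KV_nearest_psd_def by simp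
  have D: "?D \<in> carrier_mat n n" and K: "KV V X \<in> carrier_mat n n"
    using KV_carrier[OF carrier] by auto
  have F: "?F \<in> carrier_mat n n" using minus_carrier_mat[OF D] .
  have sym: "?F $$ (i,j) = ?F $$ (j,i)"
    using KV_symmetric[OF carrier psd_mat_symm[OF X] ij(2,3)]
      KV_symmetric[OF carrier psd_mat_symm[OF X0] ij(2,3)] carrier ij by simp
  have "?D + 1 \<cdot>\<^sub>m ?F = KV V X" using D K by (intro eq_matI) auto
  then have "fro_sq (KV V X - (?D + \<alpha> \<cdot>\<^sub>m Emat n i j)) = fro_sq ?F - 4 * \<alpha> * ?F $$ (i,j) + 2 * \<alpha>^2"
    using fro_sq_shift_minus_Emat[OF D F sym ij, of 1 \<alpha>] by simp
  moreover have "fro_sq (?D - (?D + \<alpha> \<cdot>\<^sub>m Emat n i j)) = 2 * \<alpha>^2"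
    using fro_sq_shift_minus_Emat[OF D zero_carrier_mat _ ij, of 0 \<alpha>] D ij by simp
  moreover have "fro_sq (KV V X - (?D + \<alpha> \<cdot>\<^sub>m Emat n i j)) \<le> fro_sq (?D - (?D + \<alpha> \<cdot>\<^sub>m Emat n i j))"
    using near X0 carrier unfolding KV_nearest_psd_def by simp
  moreover have "0 \<le> ?F $$ (i,j)" using KV_nonneg[OF carrier X ij(2,3)] D0ij carrier ij by simp
  then have "4 * \<alpha> * ?F $$ (i,j) \<le> 0" using \<alpha> by (simp add: mult_nonpos_nonneg)
  ultimately have "fro_sq ?F \<le> 0" by linarith
  then show ?thesis using fro_sq_nonneg[of ?F] fro_sq_diff_eq_0_iff[OF K D] by simp
qed

lemma nearest_eq_iff_zero_entry:
  assumes ij: "i \<noteq> j" "i < n" "j < n" and X0: "psd_mat m X0" and \<alpha>: "\<alpha> \<noteq> 0"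
    and near: "KV_nearest_psd V (KV V X0 + \<alpha> \<cdot>\<^sub>m Emat n i j) X"
  shows "KV V X0 = KV V X \<longleftrightarrow> KV V X0 $$ (i,j) = 0 \<and> \<alpha> < 0"
proof
  assume "KV V X0 = KV V X"
  then show "KV V X0 $$ (i,j) = 0 \<and> \<alpha> < 0"
    using nearest_imp_nonpos[OF ij] nearest_imp_entry_zero[OF ij] near \<alpha> by force
next
  assume "KV V X0 $$ (i,j) = 0 \<and> \<alpha> < 0"
  then show "KV V X0 = KV V X"
    using zero_entry_imp_nearest_eq[OF ij X0 _ _ near] by simp
qed

end


theorem mainTheorem3:
  fixes n :: nat and V D0 Xbar :: "real mat" and i j :: nat and \<alpha> :: real
  assumes n2: "n \<ge> 2"
    and V: "V \<in> carrier_mat n (n - 1)"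
    and orth: "transpose_mat (mat n n (\<lambda>(a,b). if b < n - 1 then V $$ (a,b) else 1 / sqrt (real n)))
                 * mat n n (\<lambda>(a,b). if b < n - 1 then V $$ (a,b) else 1 / sqrt (real n)) = 1\<^sub>m n"
    and D0: "EDM n D0"
    and ij: "i < j" "j < n"
    and notEDM: "\<not> EDM n (D0 + \<alpha> \<cdot>\<^sub>m Emat n i j)"
    and Xbar_min: "psd_mat (n - 1) Xbar"
      "\<forall>X. psd_mat (n - 1) X \<longrightarrow>
          (1/2) * fro_sq (KV V Xbar - (D0 + \<alpha> \<cdot>\<^sub>m Emat n i j))
            \<le> (1/2) * fro_sq (KV V X - (D0 + \<alpha> \<cdot>\<^sub>m Emat n i j))"
  shows "KV_adj V (Emat n i j) =
           mat (n - 1) (n - 1) (\<lambda>(a,b). 2 * ((row V i - row V j) $ a) * ((row V i - row V j) $ b))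
       \<and> \<alpha> \<noteq> 0
       \<and> KV_adj V (Emat n i j) \<noteq> 0\<^sub>m (n - 1) (n - 1)
       \<and> psd_mat (n - 1) (KV_adj V (Emat n i j))
       \<and> ((psd_mat (n - 1) (KV_pinv V D0) \<and> mtrace (KV_pinv V D0 * KV_adj V (Emat n i j)) = 0)
            \<longleftrightarrow> mtrace (KV_pinv V D0 * KV_adj V (Emat n i j)) = 0)
       \<and> (D0 = KV V Xbar \<longleftrightarrow>
            (psd_mat (n - 1) (KV_pinv V D0) \<and> mtrace (KV_pinv V D0 * KV_adj V (Emat n i j)) = 0 \<and> \<alpha> < 0))
       \<and> ((psd_mat (n - 1) (KV_pinv V D0) \<and> mtrace (KV_pinv V D0 * KV_adj V (Emat n i j)) = 0 \<and> \<alpha> < 0)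
            \<longleftrightarrow> (D0 $$ (i,j) = 0 \<and> \<alpha> < 0))"
proof -
  interpret centred_frame n "n - 1" V
    using centred_frameI_bordered_orthogonal[OF _ V orth] n2 by simp
  have ij': "i \<noteq> j" "i < n" "j < n" using ij by auto
  obtain X0 where X0: "psd_mat (n - 1) X0" and D0_eq: "D0 = KV V X0"
    using EDM_imp_KV_psd[OF D0] by metis
  have pinv: "KV_pinv V D0 = X0" using KV_pinv_KV[OF psd_mat_symm[OF X0]] D0_eq by simp
  have \<alpha>: "\<alpha> \<noteq> 0"
  proof
    assume "\<alpha> = 0"
    then have "D0 + \<alpha> \<cdot>\<^sub>m Emat n i j = D0" using D0 unfolding EDM_def by (intro eq_matI) auto
    then show False using notEDM D0 by simp
  qed
  have near: "KV_nearest_psd V (KV V X0 + \<alpha> \<cdot>\<^sub>m Emat n i j) Xbar"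
    using Xbar_min carrier D0_eq unfolding KV_nearest_psd_def by simp
  show ?thesis
    using KV_adj_Emat[OF carrier ij'] KV_adj_Emat_nonzero[OF ij'] KV_adj_Emat_psd[OF ij'] \<alpha> X0
      mtrace_mult_KV_adj_Emat[OF psd_mat_symm[OF X0] ij'] nearest_eq_iff_zero_entry[OF ij' X0 \<alpha> near]
    unfolding pinv unfolding D0_eq by auto
qed

end
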